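(* Let $M=\Gamma\backslash\mathbf{H}^3$ be a non-compact hyperbolic $3$-manifold, $C$ the maximal representative of a cusp of $M$, and suppose (after conjugating $\Gamma$) that two tangent horoballs of the preimage of $C$ in $\mathbf{H}^3$ are centered at $0$ and $\infty$, denoted $B_0$ and $B_\infty=\{x_3>h\}$ with $h>0$. If $\gamma\in\Gamma$ is a loxodromic element with $\gamma(B_0)=B_\infty$, and $b=\gamma(\infty)\in\mathbf{C}$, then $$2\cosh(\ell_\gamma/2)\;\le\;\frac{\sqrt{4h^2+|b|^2}}{h},$$ where $\ell_\gamma$ is the translation length of $\gamma$.
   Context: Hyperbolic manifolds are complete, of constant curvature $-1$, of finite volume, possibly non-orientable; $\Gamma\subset\mathsf{Isom}(\mathbf{H}^3)$ is discrete torsion-free. We use the upper half-space model $\mathbf{H}^3=\{x_1+x_2i+x_3j:\ x_3>0\}$ with boundary $\mathbf{C}\cup\{\infty\}$. For $x\in\partial\mathbf{H}^3$, $\Gamma_x$ is its stabilizer in $\Gamma$. A cusp region is $\Gamma_x\backslash B$, with $B$ an open horoball centered at a parabolic fixed point $x$ such that no element of $\Gamma\setminus\Gamma_x$ identifies two points of $B$; a cusp is an equivalence class of cusp regions under "one contains the other", and its maximal representative is the union of its members. The preimage of the maximal representative in $\mathbf{H}^3$ is a $\Gamma$-invariant family of horoballs with disjoint interiors, some of which are tangent. *)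

theory Defs
  imports "HOL-Analysis.Analysis"
begin

text \<open>Upper half-space model: a point x1 + x2 i + x3 j is the pair (x1 + x2 i, x3) with x3 > 0.
  Boundary points are elements of complex option, None standing for infinity.\<close>

type_synonym pt = "complex \<times> real"

definition H3 :: "pt set" where
  "H3 = {p. snd p > 0}"

definition hdist :: "pt \<Rightarrow> pt \<Rightarrow> real" where
  "hdist p q = arcosh (1 + ((cmod (fst p - fst q))\<^sup>2 + (snd p - snd q)\<^sup>2) / (2 * snd p * snd q))"

text \<open>Isometries of H3, extended by the identity outside H3 (so that composition / inverse
  form a genuine group of functions).\<close>
definition isometry :: "(pt \<Rightarrow> pt) \<Rightarrow> bool" where
  "isometry f \<longleftrightarrow> bij_betw f H3 H3 \<and> (\<forall>p\<in>H3. \<forall>q\<in>H3. hdist (f p) (f q) = hdist p q)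
      \<and> (\<forall>p. p \<notin> H3 \<longrightarrow> f p = p)"

definition transl_len :: "(pt \<Rightarrow> pt) \<Rightarrow> real" where
  "transl_len g = Inf {hdist p (g p) | p. p \<in> H3}"

definition loxodromic :: "(pt \<Rightarrow> pt) \<Rightarrow> bool" where
  "loxodromic g \<longleftrightarrow> isometry g \<and> transl_len g > 0 \<and> (\<exists>p\<in>H3. hdist p (g p) = transl_len g)"

definition parabolic :: "(pt \<Rightarrow> pt) \<Rightarrow> bool" where
  "parabolic g \<longleftrightarrow> isometry g \<and> \<not> (\<exists>p\<in>H3. hdist p (g p) = transl_len g)"

text \<open>Boundary extension: the geodesic ray towards the boundary point zeta is mapped by g
  to a curve converging (in the closed upper half-space plus infinity) to eta.\<close>
fun ray :: "complex option \<Rightarrow> real \<Rightarrow> pt" where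
  "ray None t = (0, t)"
| "ray (Some z) t = (z, t)"

fun rayfilter :: "complex option \<Rightarrow> real filter" where
  "rayfilter None = at_top"
| "rayfilter (Some z) = at_right 0"

fun converges_to :: "complex option \<Rightarrow> (real \<Rightarrow> pt) \<Rightarrow> real filter \<Rightarrow> bool" where
  "converges_to None c F = filterlim (\<lambda>t. norm (c t)) at_top F"
| "converges_to (Some w) c F = (c \<longlongrightarrow> (w, 0)) F"

definition bext :: "(pt \<Rightarrow> pt) \<Rightarrow> complex option \<Rightarrow> complex option \<Rightarrow> bool" where
  "bext g \<zeta> \<eta> \<longleftrightarrow> converges_to \<eta> (\<lambda>t. g (ray \<zeta> t)) (rayfilter \<zeta>)"

text \<open>Open horoballs; for a finite centre, s is the Euclidean diameter; at infinity, s is the height.\<close>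
fun horo :: "complex option \<Rightarrow> real \<Rightarrow> pt set" where
  "horo None s = {p. snd p > s}"
| "horo (Some z) s = {p. snd p > 0 \<and> (cmod (fst p - z))\<^sup>2 + (snd p - s / 2)\<^sup>2 < (s / 2)\<^sup>2}"

definition horoball :: "complex option \<Rightarrow> pt set \<Rightarrow> bool" where
  "horoball \<zeta> B \<longleftrightarrow> (\<exists>s>0. B = horo \<zeta> s)"

definition isom_group :: "(pt \<Rightarrow> pt) set \<Rightarrow> bool" where
  "isom_group \<Gamma> \<longleftrightarrow> (\<forall>g\<in>\<Gamma>. isometry g) \<and> id \<in> \<Gamma> \<and> (\<forall>g\<in>\<Gamma>. \<forall>k\<in>\<Gamma>. g \<circ> k \<in> \<Gamma>)
      \<and> (\<forall>g\<in>\<Gamma>. inv g \<in> \<Gamma>)"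

text \<open>Discreteness (for subgroups of Isom(H3) equivalent to proper discontinuity).\<close>
definition discrete_group :: "(pt \<Rightarrow> pt) set \<Rightarrow> bool" where
  "discrete_group \<Gamma> \<longleftrightarrow> (\<forall>p\<in>H3. \<forall>r. finite {g\<in>\<Gamma>. hdist p (g p) \<le> r})"

definition torsion_free :: "(pt \<Rightarrow> pt) set \<Rightarrow> bool" where
  "torsion_free \<Gamma> \<longleftrightarrow> (\<forall>g\<in>\<Gamma>. \<forall>n::nat. n > 0 \<and> g ^^ n = id \<longrightarrow> g = id)"

text \<open>Finite hyperbolic volume of the quotient: a Borel strict fundamental set of finite
  hyperbolic volume (volume element dx1 dx2 dx3 / x3^3).\<close>
definition finite_volume :: "(pt \<Rightarrow> pt) set \<Rightarrow> bool" where
  "finite_volume \<Gamma> \<longleftrightarrow> (\<exists>F. F \<in> sets borel \<and> F \<subseteq> H3 \<and>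
      (\<forall>p\<in>H3. \<exists>!q. q \<in> F \<and> (\<exists>g\<in>\<Gamma>. q = g p)) \<and>
      (\<integral>\<^sup>+ p. ennreal (1 / (snd p) ^ 3) * indicator F p \<partial>lborel) < \<infinity>)"

definition noncompact_quotient :: "(pt \<Rightarrow> pt) set \<Rightarrow> bool" where
  "noncompact_quotient \<Gamma> \<longleftrightarrow> \<not> (\<exists>K. compact K \<and> K \<subseteq> H3 \<and> H3 \<subseteq> (\<Union>g\<in>\<Gamma>. g ` K))"

definition hyperbolic_manifold_group :: "(pt \<Rightarrow> pt) set \<Rightarrow> bool" where
  "hyperbolic_manifold_group \<Gamma> \<longleftrightarrow> isom_group \<Gamma> \<and> discrete_group \<Gamma> \<and> torsion_free \<Gamma> \<and> finite_volume \<Gamma>"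

definition parabolic_fixed_point :: "(pt \<Rightarrow> pt) set \<Rightarrow> complex option \<Rightarrow> bool" where
  "parabolic_fixed_point \<Gamma> \<zeta> \<longleftrightarrow> (\<exists>g\<in>\<Gamma>. parabolic g \<and> bext g \<zeta> \<zeta>)"

text \<open>B is a horoball at a parabolic fixed point zeta such that Gamma_zeta \ B is a cusp region:
  no element of Gamma outside the stabilizer of zeta identifies two points of B.\<close>
definition cusp_horoball :: "(pt \<Rightarrow> pt) set \<Rightarrow> complex option \<Rightarrow> pt set \<Rightarrow> bool" where
  "cusp_horoball \<Gamma> \<zeta> B \<longleftrightarrow> parabolic_fixed_point \<Gamma> \<zeta> \<and> horoball \<zeta> B \<and>
      (\<forall>g\<in>\<Gamma>. \<not> bext g \<zeta> \<zeta> \<longrightarrow> (\<forall>p\<in>B. g p \<notin> B))"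

definition max_cusp_horoball :: "(pt \<Rightarrow> pt) set \<Rightarrow> complex option \<Rightarrow> pt set \<Rightarrow> bool" where
  "max_cusp_horoball \<Gamma> \<zeta> B \<longleftrightarrow> cusp_horoball \<Gamma> \<zeta> B \<and> (\<forall>B'. cusp_horoball \<Gamma> \<zeta> B' \<longrightarrow> B' \<subseteq> B)"

definition cusp_preimage_horoballs :: "(pt \<Rightarrow> pt) set \<Rightarrow> pt set \<Rightarrow> pt set set" where
  "cusp_preimage_horoballs \<Gamma> B = (\<lambda>g. g ` B) ` \<Gamma>"

end

theory Submission
  imports Defs
begin

text \<open>The distances from a point to the points of a horoball form an open ray starting at the
  distance to the horoball, and an isometry carrying one horoball onto another preserves these
  rays. As \<gamma> carries the horoball of height h at 0 onto the horoball of height h at infinity,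
  it sends (0, t), t \<ge> h, to height h^2 / t; since cosh of a distance is cosh of the log of
  the height ratio plus a nonnegative horizontal term, these images lie on one vertical line,
  which must end at b. So \<gamma> (0, h) = (b, h), and the translation length is at most the
  distance between these two points of equal height.\<close>

lemma isometry_maps_H3: "isometry f \<Longrightarrow> p \<in> H3 \<Longrightarrow> f p \<in> H3"
  unfolding isometry_def bij_betw_def by blast

lemma hdist_isometry: "isometry f \<Longrightarrow> p \<in> H3 \<Longrightarrow> q \<in> H3 \<Longrightarrow> hdist (f p) (f q) = hdist p q"
  unfolding isometry_def by blast

lemma hdist_nonneg: "p \<in> H3 \<Longrightarrow> q \<in> H3 \<Longrightarrow> 0 \<le> hdist p q"
  unfolding hdist_def H3_def by (auto intro!: arcosh_nonneg_real divide_nonneg_pos)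

lemma cosh_hdist:
  assumes "p \<in> H3" "q \<in> H3"
  shows "cosh (hdist p q) = cosh (ln (snd q / snd p)) + (cmod (fst p - fst q))\<^sup>2 / (2 * snd p * snd q)"
proof -
  have pos: "snd p > 0" "snd q > 0" using assms unfolding H3_def by auto
  have "cosh (hdist p q) = 1 + ((cmod (fst p - fst q))\<^sup>2 + (snd p - snd q)\<^sup>2) / (2 * snd p * snd q)"
    unfolding hdist_def using pos by (intro cosh_arcosh_real) (auto intro!: divide_nonneg_pos)
  also have "\<dots> = cosh (ln (snd q / snd p)) + (cmod (fst p - fst q))\<^sup>2 / (2 * snd p * snd q)"
    using pos by (simp add: cosh_ln_real field_simps power2_eq_square)
  finally show ?thesis .
qed

lemma abs_ln_height_ratio_le_hdist:
  assumes "p \<in> H3" "q \<in> H3"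
  shows "\<bar>ln (snd q / snd p)\<bar> \<le> hdist p q"
proof -
  have "cosh (ln (snd q / snd p)) \<le> cosh (hdist p q)"
    using cosh_hdist[OF assms] assms by (simp add: H3_def)
  then show ?thesis
    using cosh_real_nonneg_le_iff[of "\<bar>ln (snd q / snd p)\<bar>" "hdist p q"] hdist_nonneg[OF assms]
    by simp
qed

lemma hdist_vertical:
  assumes "u > 0" "v > 0"
  shows "hdist (w, u) (w, v) = \<bar>ln (v / u)\<bar>"
proof -
  have "cosh (hdist (w, u) (w, v)) = cosh (ln (v / u))"
    using cosh_hdist[of "(w, u)" "(w, v)"] assms by (simp add: H3_def)
  then show ?thesis using hdist_nonneg[of "(w, u)" "(w, v)"] assms by (simp add: H3_def)
qed

lemma horo_Some_subset_H3: "horo (Some z) s \<subseteq> H3"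
  unfolding H3_def by auto

lemma horo_Some_height_less:
  assumes "q \<in> horo (Some z) s"
  shows "snd q < s"
proof -
  have "(cmod (fst q - z))\<^sup>2 + (snd q - s / 2)\<^sup>2 < (s / 2)\<^sup>2" "0 < snd q"
    using assms by auto
  then have "(snd q - s / 2)\<^sup>2 < (s / 2)\<^sup>2"
    using zero_le_power2[of "cmod (fst q - z)"] by linarith
  then have "snd q * (snd q - s) < 0" by (simp add: power2_eq_square algebra_simps)
  then show ?thesis using \<open>0 < snd q\<close> by (simp add: mult_less_0_iff)
qed

lemma vertical_in_horo_Some:
  assumes "0 < u" "u < s"
  shows "(z, u) \<in> horo (Some z) s"
proof -
  have "(u - s / 2)\<^sup>2 - (s / 2)\<^sup>2 = u * (u - s)" by (simp add: power2_eq_square algebra_simps)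
  moreover have "u * (u - s) < 0" using assms by (simp add: mult_pos_neg)
  ultimately show ?thesis using assms by simp
qed

lemma hdist_image_isometry:
  assumes "isometry f" "p \<in> H3" "S \<subseteq> H3"
  shows "hdist (f p) ` f ` S = hdist p ` S"
  using hdist_isometry[OF assms(1,2)] assms(3) by (force simp: image_image)

lemma hdist_image_horo_None:
  assumes "0 < u" "u \<le> h"
  shows "hdist (w, u) ` horo None h = {ln (h / u)<..}"
proof (intro equalityI subsetI)
  fix d assume "d \<in> hdist (w, u) ` horo None h"
  then obtain q where q: "h < snd q" "d = hdist (w, u) q" by auto
  have "ln (h / u) < ln (snd q / u)" using q assms by (simp add: divide_strict_right_mono)
  also have "\<dots> \<le> d" using q assms abs_ln_height_ratio_le_hdist[of "(w, u)" q] by (simp add: H3_def)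
  finally show "d \<in> {ln (h / u)<..}" by simp
next
  fix d assume "d \<in> {ln (h / u)<..}"
  then have d: "ln (h / u) < d" by simp
  moreover have "0 \<le> ln (h / u)" using assms by simp
  ultimately have "0 < d" by linarith
  have "h / u < exp d" using exp_less_mono[OF d] assms by simp
  then have "(w, u * exp d) \<in> horo None h" using assms by (simp add: field_simps)
  moreover have "hdist (w, u) (w, u * exp d) = d"
    using hdist_vertical[of u "u * exp d" w] \<open>0 < d\<close> assms by simp
  ultimately show "d \<in> hdist (w, u) ` horo None h" by (metis rev_image_eqI)
qed

lemma hdist_image_horo_Some:
  assumes "0 < h" "h \<le> t"
  shows "hdist (z, t) ` horo (Some z) h = {ln (t / h)<..}"
proof (intro equalityI subsetI)
  fix d assume "d \<in> hdist (z, t) ` horo (Some z) h"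
  then obtain q where q: "q \<in> horo (Some z) h" "d = hdist (z, t) q" by auto
  have qH: "q \<in> H3" using q horo_Some_subset_H3 by blast
  then have "0 < snd q" "snd q < h" using q horo_Some_height_less by (auto simp: H3_def)
  then have "ln (t / h) < - ln (snd q / t)" using assms by (simp add: ln_div)
  also have "\<dots> \<le> d" using q qH assms abs_ln_height_ratio_le_hdist[of "(z, t)" q] by (simp add: H3_def)
  finally show "d \<in> {ln (t / h)<..}" by simp
next
  fix d assume "d \<in> {ln (t / h)<..}"
  then have d: "ln (t / h) < d" by simp
  moreover have "0 \<le> ln (t / h)" using assms by simp
  ultimately have "0 < d" by linarith
  have "t / h < exp d" using exp_less_mono[OF d] assms by simp
  then have "(z, t / exp d) \<in> horo (Some z) h"
    using assms by (intro vertical_in_horo_Some) (auto simp: field_simps)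
  moreover have "hdist (z, t) (z, t / exp d) = d"
    using hdist_vertical[of t "t / exp d" z] \<open>0 < d\<close> assms by (simp add: ln_div)
  ultimately show "d \<in> hdist (z, t) ` horo (Some z) h" by (metis rev_image_eqI)
qed

lemma isometry_horo_Some_None_height:
  assumes f: "isometry f" and h: "0 < h" "h \<le> t"
    and fB: "f ` horo (Some z) h = horo None h"
  shows "snd (f (z, t)) = h\<^sup>2 / t"
proof -
  have x: "(z, t) \<in> H3" "(z, t) \<notin> horo (Some z) h"
    using h horo_Some_height_less[of "(z, t)" z h] by (auto simp: H3_def)
  obtain w u where y: "f (z, t) = (w, u)" by fastforce
  then have "0 < u" using isometry_maps_H3[OF f x(1)] by (simp add: H3_def)
  have "u \<le> h"
  proof (rule ccontr)
    assume "\<not> u \<le> h"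
    then have "f (z, t) \<in> f ` horo (Some z) h" using y fB by simp
    then show False
      using x f horo_Some_subset_H3 unfolding isometry_def bij_betw_def inj_on_def by blast
  qed
  have "{ln (h / u)<..} = hdist (f (z, t)) ` f ` horo (Some z) h"
    by (simp only: y fB hdist_image_horo_None[OF \<open>0 < u\<close> \<open>u \<le> h\<close>])
  also have "\<dots> = hdist (z, t) ` horo (Some z) h"
    by (rule hdist_image_isometry[OF f x(1) horo_Some_subset_H3])
  also have "\<dots> = {ln (t / h)<..}" by (rule hdist_image_horo_Some[OF h])
  finally have "h / u = t / h" using \<open>0 < u\<close> h by simp
  then show ?thesis using y \<open>0 < u\<close> h by (simp add: field_simps power2_eq_square)
qed

lemma isometry_horo_Some_None_vertical:
  assumes f: "isometry f" and h: "0 < h" "h \<le> t"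
    and fB: "f ` horo (Some z) h = horo None h"
  shows "f (z, t) = (fst (f (z, h)), h\<^sup>2 / t)"
proof -
  define c where "c = fst (f (z, h))"
  obtain w where w: "f (z, t) = (w, h\<^sup>2 / t)"
    using isometry_horo_Some_None_height[OF f h fB] by (metis prod.collapse)
  have c: "f (z, h) = (c, h)"
    using isometry_horo_Some_None_height[OF f h(1) order_refl fB] h unfolding c_def
    by (simp add: prod_eq_iff power2_eq_square)
  have H: "(z, h) \<in> H3" "(z, t) \<in> H3" "(c, h) \<in> H3" "(w, h\<^sup>2 / t) \<in> H3"
    using h by (auto simp: H3_def)
  have "cosh (hdist (c, h) (w, h\<^sup>2 / t)) = cosh (hdist (z, h) (z, t))"
    using hdist_isometry[OF f H(1,2)] by (simp add: c w)
  also have "\<dots> = cosh (ln ((h\<^sup>2 / t) / h))"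
    using cosh_hdist[OF H(1,2)] h by (simp add: power2_eq_square ln_div)
  finally have "(cmod (c - w))\<^sup>2 / (2 * h * (h\<^sup>2 / t)) = 0"
    using cosh_hdist[OF H(3,4)] by simp
  then have "w = c" using h by simp
  then show ?thesis using w c_def by simp
qed

lemma bext_None_of_vertical:
  assumes "bext f None (Some b)" "\<And>t. h \<le> t \<Longrightarrow> f (0, t) = (c, k / t)"
  shows "b = c"
proof -
  have "((\<lambda>t. f (0, t)) \<longlongrightarrow> (b, 0)) at_top" using assms(1) by (simp add: bext_def)
  moreover have "((\<lambda>t::real. (c, k / t)) \<longlongrightarrow> (c, 0)) at_top"
    by (intro tendsto_Pair tendsto_const tendsto_divide_0[OF tendsto_const]
        filterlim_at_top_imp_at_infinity filterlim_ident)
  then have "((\<lambda>t. f (0, t)) \<longlongrightarrow> (c, 0)) at_top"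
    by (rule tendsto_cong[THEN iffD1, rotated])
      (use eventually_ge_at_top[of h] in \<open>rule eventually_mono, simp add: assms(2)\<close>)
  ultimately have "(b, 0::real) = (c, 0)" by (rule tendsto_unique[rotated]) simp
  then show ?thesis by simp
qed

lemma transl_len_le_hdist:
  assumes "isometry g" "p \<in> H3"
  shows "transl_len g \<le> hdist p (g p)"
  unfolding transl_len_def
proof (rule cInf_lower)
  show "hdist p (g p) \<in> {hdist p (g p) |p. p \<in> H3}" using assms(2) by blast
  show "bdd_below {hdist p (g p) |p. p \<in> H3}"
    unfolding bdd_below_def using assms(1) hdist_nonneg isometry_maps_H3 by blast
qed

lemma two_cosh_half_hdist_same_height:
  assumes "h > 0"
  shows "2 * cosh (hdist (a, h) (c, h) / 2) = sqrt (4 * h\<^sup>2 + (cmod (a - c))\<^sup>2) / h"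
proof -
  define D where "D = hdist (a, h) (c, h)"
  have "cosh D = 1 + (cmod (a - c))\<^sup>2 / (2 * h * h)"
    unfolding D_def using cosh_hdist[of "(a, h)" "(c, h)"] assms by (simp add: H3_def)
  moreover have "cosh D = 2 * (cosh (D / 2))\<^sup>2 - 1" using cosh_double_cosh[of "D / 2"] by simp
  ultimately have "(2 * cosh (D / 2))\<^sup>2 = (4 * h\<^sup>2 + (cmod (a - c))\<^sup>2) / h\<^sup>2"
    using assms by (simp add: field_simps power2_eq_square)
  then have "2 * cosh (D / 2) = sqrt ((4 * h\<^sup>2 + (cmod (a - c))\<^sup>2) / h\<^sup>2)"
    by (metis abs_of_pos cosh_real_pos mult_pos_pos real_sqrt_abs zero_less_numeral)
  then show ?thesis unfolding D_def using assms by (simp add: real_sqrt_divide)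
qed

theorem lemma5:
  fixes \<Gamma> :: "(pt \<Rightarrow> pt) set" and \<zeta> :: "complex option" and B :: "pt set"
    and h :: real and \<gamma> :: "pt \<Rightarrow> pt" and b :: complex
  assumes "hyperbolic_manifold_group \<Gamma>"
    and "noncompact_quotient \<Gamma>"
    and "max_cusp_horoball \<Gamma> \<zeta> B"
    and "h > 0"
    and "horo None h \<in> cusp_preimage_horoballs \<Gamma> B"
    and "horo (Some 0) h \<in> cusp_preimage_horoballs \<Gamma> B"
    and "\<gamma> \<in> \<Gamma>" and "loxodromic \<gamma>"
    and "\<gamma> ` horo (Some 0) h = horo None h"
    and "bext \<gamma> None (Some b)"
  shows "2 * cosh (transl_len \<gamma> / 2) \<le> sqrt (4 * h\<^sup>2 + (cmod b)\<^sup>2) / h"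
proof -
  have iso: "isometry \<gamma>" and T: "0 < transl_len \<gamma>"
    using \<open>loxodromic \<gamma>\<close> by (auto simp: loxodromic_def)
  have ray: "\<gamma> (0, t) = (fst (\<gamma> (0, h)), h\<^sup>2 / t)" if "h \<le> t" for t
    using isometry_horo_Some_None_vertical[OF iso \<open>h > 0\<close> that assms(9)] .
  then have "b = fst (\<gamma> (0, h))" using bext_None_of_vertical[OF assms(10)] by blast
  with ray[of h] have \<gamma>h: "\<gamma> (0, h) = (b, h)" using \<open>h > 0\<close> by (simp add: power2_eq_square)
  have H: "(0, h) \<in> H3" "(b, h) \<in> H3" using \<open>h > 0\<close> by (auto simp: H3_def)
  have "transl_len \<gamma> \<le> hdist (0, h) (b, h)" using transl_len_le_hdist[OF iso H(1)] by (simp add: \<gamma>h)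
  then have "2 * cosh (transl_len \<gamma> / 2) \<le> 2 * cosh (hdist (0, h) (b, h) / 2)"
    using T hdist_nonneg[OF H] by (simp add: cosh_real_nonneg_le_iff)
  also have "\<dots> = sqrt (4 * h\<^sup>2 + (cmod b)\<^sup>2) / h"
    using two_cosh_half_hdist_same_height[OF \<open>h > 0\<close>, of 0 b] by simp
  finally show ?thesis .
qed

end
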